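(* Let $\alpha>0$ and $\zeta>0$, and define the power series $$\Omega_0^{(4)}(v)=\frac{\Gamma(3/4)}{\Gamma(\zeta/4)}\sum_{l=0}^{\infty}\frac{\Gamma(l/2+\zeta/4)}{l!\,\Gamma(l/2+3/4)}\Big(\frac{-v^2}{2\alpha^{1/2}}\Big)^l,$$ $$\Omega_1^{(4)}(v)=\frac{v\sqrt{\pi/2}}{\Gamma[(\zeta+1)/4]}\sum_{l=0}^{\infty}\frac{\Gamma[(l+1+\zeta)/4]\,s(l)}{\Gamma(l/4+1)\,\Gamma[(l+3)/2]}\Big[\frac{-v}{(4\alpha)^{1/4}}\Big]^l,$$ with $s(l)=2^{-1/2}[\cos(l\pi/4)+\sin(l\pi/4)]\cos(l\pi/4)$. Let $$f_1(v)={}_1F_2\Big(\tfrac{\zeta}{4};\tfrac12,\tfrac34;\tfrac{v^4}{16\alpha}\Big),\quad f_2(v)=v\,{}_1F_2\Big(\tfrac{\zeta+1}{4};\tfrac34,\tfrac54;\tfrac{v^4}{16\alpha}\Big),\quad f_3(v)=v^2\,{}_1F_2\Big(\tfrac{\zeta+2}{4};\tfrac54,\tfrac32;\tfrac{v^4}{16\alpha}\Big).$$ Then $f_1,f_2,f_3$ are three linearly independent solutions of $\big(\alpha\,\tfrac{d^3}{dv^3}-v^2\tfrac{d}{dv}-\zeta v\big)\Omega(v)=0$, and $$\Omega_0^{(4)}=f_1-\frac{2\,\Gamma(3/4)\,\Gamma[(\zeta+2)/4]}{\sqrt{\alpha}\,\Gamma(1/4)\,\Gamma(\zeta/4)}\,f_3,\qquad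 \Omega_1^{(4)}=f_2-\frac{(2\pi)^{1/2}\,\Gamma[(\zeta+2)/4]}{\alpha^{1/4}\,\Gamma(1/4)\,\Gamma[(\zeta+1)/4]}\,f_3 .$$
   Context: ${}_1F_2$ is the generalized hypergeometric function; $\alpha^{1/2},\alpha^{1/4}$ denote positive roots. *)

theory Defs
  imports "HOL-Analysis.Analysis"
begin

definition hyp1F2 :: "real \<Rightarrow> real \<Rightarrow> real \<Rightarrow> real \<Rightarrow> real" where
  "hyp1F2 a b1 b2 z =
     (\<Sum>n. pochhammer a n / (pochhammer b1 n * pochhammer b2 n * fact n) * z ^ n)"

definition Omega0 :: "real \<Rightarrow> real \<Rightarrow> real \<Rightarrow> real" where
  "Omega0 \<alpha> \<zeta> v = Gamma (3/4) / Gamma (\<zeta>/4) *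
     (\<Sum>l. Gamma (real l / 2 + \<zeta>/4) / (fact l * Gamma (real l / 2 + 3/4))
            * (- (v^2) / (2 * sqrt \<alpha>)) ^ l)"

definition s_coef :: "nat \<Rightarrow> real" where
  "s_coef l = (cos (real l * pi / 4) + sin (real l * pi / 4)) * cos (real l * pi / 4) / sqrt 2"

definition Omega1 :: "real \<Rightarrow> real \<Rightarrow> real \<Rightarrow> real" where
  "Omega1 \<alpha> \<zeta> v = v * sqrt (pi / 2) / Gamma ((\<zeta> + 1)/4) *
     (\<Sum>l. Gamma ((real l + 1 + \<zeta>)/4) * s_coef l / (Gamma (real l / 4 + 1) * Gamma ((real l + 3)/2))
            * (- v / ((4 * \<alpha>) powr (1/4))) ^ l)"

definition f1 :: "real \<Rightarrow> real \<Rightarrow> real \<Rightarrow> real" where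
  "f1 \<alpha> \<zeta> v = hyp1F2 (\<zeta>/4) (1/2) (3/4) (v^4 / (16 * \<alpha>))"

definition f2 :: "real \<Rightarrow> real \<Rightarrow> real \<Rightarrow> real" where
  "f2 \<alpha> \<zeta> v = v * hyp1F2 ((\<zeta>+1)/4) (3/4) (5/4) (v^4 / (16 * \<alpha>))"

definition f3 :: "real \<Rightarrow> real \<Rightarrow> real \<Rightarrow> real" where
  "f3 \<alpha> \<zeta> v = v^2 * hyp1F2 ((\<zeta>+2)/4) (5/4) (3/2) (v^4 / (16 * \<alpha>))"

definition solves_ODE :: "real \<Rightarrow> real \<Rightarrow> (real \<Rightarrow> real) \<Rightarrow> bool" where
  "solves_ODE \<alpha> \<zeta> f \<longleftrightarrow>
     (\<exists>d1 d2 d3. (\<forall>v. (f has_real_derivative d1 v) (at v)) \<and>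
                 (\<forall>v. (d1 has_real_derivative d2 v) (at v)) \<and>
                 (\<forall>v. (d2 has_real_derivative d3 v) (at v)) \<and>
                 (\<forall>v. \<alpha> * d3 v - v^2 * d1 v - \<zeta> * v * f v = 0))"

end

theory Submission
  imports Defs
begin

(* Writing a solution as a power series sum c_n v^n, the equation alpha f''' - v^2 f' - zeta v f = 0
   amounts to c_3 = 0 and alpha (n+2)(n+3)(n+4) c_(n+4) = (n + zeta) c_n. This recurrence does not
   mix the residue classes of n mod 4, and on the class of r = 0, 1, 2 it is the recurrence of the
   Taylor coefficients of v^r 1F2((zeta+r)/4; ...; v^4/(16 alpha)), i.e. of f1, f2, f3. These are
   independent because f1(0) = 1, f2 is odd, and f3 is even and vanishes at 0.
   For the identities, the series of Omega0 is split by the parity of l and that of Omega1 by l mod 4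
   (s(l) is 4-periodic and vanishes for l = 2, 3 mod 4); in each class the duplication formulas for
   fact and pochhammer turn the Gamma quotients into the coefficients of one of the 1F2 series. *)

definition hyp1F2_coeff :: "real \<Rightarrow> real \<Rightarrow> real \<Rightarrow> nat \<Rightarrow> real" where
  "hyp1F2_coeff a b1 b2 n = pochhammer a n / (pochhammer b1 n * pochhammer b2 n * fact n)"

lemma hyp1F2_altdef: "hyp1F2 a b1 b2 z = (\<Sum>n. hyp1F2_coeff a b1 b2 n * z ^ n)"
  unfolding hyp1F2_def hyp1F2_coeff_def ..

lemma hyp1F2_coeff_Suc:
  "hyp1F2_coeff a b1 b2 (Suc n) =
     hyp1F2_coeff a b1 b2 n * ((a + n) / ((b1 + n) * (b2 + n) * (n + 1)))"
  unfolding hyp1F2_coeff_def pochhammer_rec' fact_Suc times_divide_times_eq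
  by (simp add: ac_simps)

lemma hyp1F2_coeff_pos: "a > 0 \<Longrightarrow> b1 > 0 \<Longrightarrow> b2 > 0 \<Longrightarrow> hyp1F2_coeff a b1 b2 n > 0"
  unfolding hyp1F2_coeff_def by (auto intro!: divide_pos_pos mult_pos_pos pochhammer_pos)

lemma hyp1F2_coeff_ratio_le:
  fixes a b1 b2 :: real and n :: nat
  assumes "a > 0" "b1 > 0" "b2 > 0"
  shows "(a + n) / ((b1 + n) * (b2 + n) * (n + 1)) \<le> (1 + a / b1) / (b2 * (n + 1))"
proof -
  have "(a + n) / (b1 + n) \<le> 1 + a / b1"
    using assms by (simp add: field_simps)
  moreover have "b2 * (n + 1) \<le> (b2 + n) * (n + 1)"
    using assms by (intro mult_right_mono) auto
  ultimately have "(a + n) / (b1 + n) / ((b2 + n) * (n + 1)) \<le> (1 + a / b1) / (b2 * (n + 1))"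
    using assms by (intro frac_le) auto
  then show ?thesis
    by (simp add: divide_divide_eq_left mult.assoc)
qed

lemma summable_hyp1F2:
  assumes "a > 0" "b1 > 0" "b2 > 0"
  shows "summable (\<lambda>n. hyp1F2_coeff a b1 b2 n * z ^ n)"
proof -
  define M where "M = \<bar>z\<bar> * (1 + a / b1) / b2"
  obtain N :: nat where N: "2 * M \<le> N"
    using real_arch_simple by blast
  show ?thesis
  proof (rule summable_ratio_test[of "1/2" N])
    fix n assume "n \<ge> N"
    have "norm (hyp1F2_coeff a b1 b2 (Suc n) * z ^ Suc n) =
        \<bar>z\<bar> * ((a + n) / ((b1 + n) * (b2 + n) * (n + 1))) * norm (hyp1F2_coeff a b1 b2 n * z ^ n)"
      using assms by (simp add: hyp1F2_coeff_Suc abs_mult power_abs)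
    also have "\<dots> \<le> M / (n + 1) * norm (hyp1F2_coeff a b1 b2 n * z ^ n)"
      using mult_left_mono[OF hyp1F2_coeff_ratio_le[OF assms, of n] abs_ge_zero[of z]]
      by (intro mult_right_mono) (simp_all add: M_def)
    also have "\<dots> \<le> 1/2 * norm (hyp1F2_coeff a b1 b2 n * z ^ n)"
      using N \<open>n \<ge> N\<close> by (intro mult_right_mono) (auto simp: field_simps)
    finally show "norm (hyp1F2_coeff a b1 b2 (Suc n) * z ^ Suc n) \<le> 1/2 * norm (hyp1F2_coeff a b1 b2 n * z ^ n)" .
  qed simp
qed

lemma hyp1F2_sums:
  "a > 0 \<Longrightarrow> b1 > 0 \<Longrightarrow> b2 > 0 \<Longrightarrow> (\<lambda>n. hyp1F2_coeff a b1 b2 n * z ^ n) sums hyp1F2 a b1 b2 z"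
  unfolding hyp1F2_altdef by (rule summable_sums[OF summable_hyp1F2])

lemma hyp1F2_0 [simp]: "hyp1F2 a b1 b2 0 = 1"
  unfolding hyp1F2_altdef powser_zero by (simp add: hyp1F2_coeff_def)

lemma hyp1F2_ge_1:
  assumes "a > 0" "b1 > 0" "b2 > 0" "z \<ge> 0"
  shows "hyp1F2 a b1 b2 z \<ge> 1"
proof -
  have "0 \<le> hyp1F2_coeff a b1 b2 n * z ^ n" for n
    using assms hyp1F2_coeff_pos[of a b1 b2 n] by simp
  then have "(\<Sum>n\<in>{0}. hyp1F2_coeff a b1 b2 n * z ^ n) \<le> (\<Sum>n. hyp1F2_coeff a b1 b2 n * z ^ n)"
    using assms by (intro sum_le_suminf summable_hyp1F2) auto
  then show ?thesis
    unfolding hyp1F2_altdef by (simp add: hyp1F2_coeff_def)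
qed

lemma sums_residue_class:
  fixes t :: "nat \<Rightarrow> 'a::real_normed_vector"
  assumes "r < m" and "\<And>n. n mod m \<noteq> r \<Longrightarrow> t n = 0" and "(\<lambda>k. t (m * k + r)) sums s"
  shows "t sums s"
proof -
  have "strict_mono (\<lambda>k. m * k + r)"
    using assms(1) by (auto simp: strict_mono_def)
  moreover have "t n = 0" if "n \<notin> range (\<lambda>k. m * k + r)" for n
  proof -
    have "n = m * (n div m) + n mod m" by simp
    then have "n mod m \<noteq> r" using that by (metis rangeI)
    then show ?thesis by (rule assms(2))
  qed
  ultimately show ?thesis
    using sums_mono_reindex assms(3) by blast
qed

lemma sums_residue_classes:
  fixes t :: "nat \<Rightarrow> 'a::real_normed_vector"
  assumes "m > 0" and "\<And>j. j < m \<Longrightarrow> (\<lambda>k. t (m * k + j)) sums s j"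
  shows "t sums (\<Sum>j<m. s j)"
proof -
  define u where "u j n = (if n mod m = j then t n else 0)" for j n
  have "u j sums s j" if "j < m" for j
  proof (rule sums_residue_class[OF that])
    show "u j n = 0" if "n mod m \<noteq> j" for n
      using that by (simp add: u_def)
    show "(\<lambda>k. u j (m * k + j)) sums s j"
      using assms(2)[OF \<open>j < m\<close>] \<open>j < m\<close> by (simp add: u_def)
  qed
  then have "(\<lambda>n. \<Sum>j<m. u j n) sums (\<Sum>j<m. s j)"
    by (intro sums_sum) auto
  moreover have "(\<Sum>j<m. u j n) = t n" for n
    using assms(1) by (simp add: u_def)
  ultimately show ?thesis by simp
qed

lemma diffs_diffs_diffs:
  "diffs (diffs (diffs c)) n = real (Suc n) * real (Suc (Suc n)) * real (Suc (Suc (Suc n))) * (c (n + 3) :: real)"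
  by (simp add: diffs_def numeral_3_eq_3)

lemma powser_ODE_identity:
  fixes c :: "nat \<Rightarrow> real"
  assumes summable: "\<And>y. summable (\<lambda>n. c n * y ^ n)"
    and c3: "c 3 = 0"
    and rec: "\<And>n. \<alpha> * (real (n + 2) * real (n + 3) * real (n + 4)) * c (n + 4) = (real n + \<zeta>) * c n"
  shows "\<alpha> * (\<Sum>n. diffs (diffs (diffs c)) n * v ^ n) =
    v * (v * (\<Sum>n. diffs c n * v ^ n) + \<zeta> * (\<Sum>n. c n * v ^ n))"
proof -
  have summable': "summable (\<lambda>n. diffs c n * y ^ n)" for y
    using summable by (rule termdiff_converges_all)
  have summable''': "summable (\<lambda>n. diffs (diffs (diffs c)) n * y ^ n)" for y
    by (intro termdiff_converges_all summable)
  have "(\<lambda>n. v * (diffs c n * v ^ n)) sums (v * (\<Sum>n. diffs c n * v ^ n))"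
    by (intro sums_mult summable_sums summable')
  then have "(\<lambda>n. real (Suc n) * c (Suc n) * v ^ Suc n) sums (v * (\<Sum>n. diffs c n * v ^ n))"
    by (simp add: diffs_def ac_simps)
  then have "(\<lambda>n. real n * c n * v ^ n) sums (v * (\<Sum>n. diffs c n * v ^ n))"
    using sums_Suc_iff[of "\<lambda>n. real n * c n * v ^ n"] by simp
  moreover have "(\<lambda>n. c n * v ^ n) sums (\<Sum>n. c n * v ^ n)"
    by (intro summable_sums summable)
  ultimately have rhs: "(\<lambda>n. v * ((real n + \<zeta>) * c n * v ^ n)) sums
      (v * (v * (\<Sum>n. diffs c n * v ^ n) + \<zeta> * (\<Sum>n. c n * v ^ n)))"
    by (intro sums_mult) (auto simp: distrib_right mult.assoc intro: sums_add sums_mult)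
  have "(\<lambda>n. diffs (diffs (diffs c)) n * v ^ n) sums (\<Sum>n. diffs (diffs (diffs c)) n * v ^ n)"
    by (intro summable_sums summable''')
  then have "(\<lambda>n. \<alpha> * (diffs (diffs (diffs c)) (Suc n) * v ^ Suc n)) sums
      (\<alpha> * (\<Sum>n. diffs (diffs (diffs c)) n * v ^ n))"
    using sums_Suc_iff[of "\<lambda>n. diffs (diffs (diffs c)) n * v ^ n"] c3
    by (intro sums_mult) (simp add: diffs_diffs_diffs)
  moreover have "\<alpha> * (diffs (diffs (diffs c)) (Suc n) * v ^ Suc n) = v * ((real n + \<zeta>) * c n * v ^ n)" for n
    using rec[of n] unfolding diffs_diffs_diffs
    by (simp add: add.commute mult.assoc mult.left_commute)
  ultimately have "(\<lambda>n. v * ((real n + \<zeta>) * c n * v ^ n)) sums (\<alpha> * (\<Sum>n. diffs (diffs (diffs c)) n * v ^ n))"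
    by (simp only:)
  then show ?thesis
    using rhs by (rule sums_unique2)
qed

lemma solves_ODE_powser:
  fixes c :: "nat \<Rightarrow> real"
  assumes summable: "\<And>y. summable (\<lambda>n. c n * y ^ n)"
    and "c 3 = 0"
    and "\<And>n. \<alpha> * (real (n + 2) * real (n + 3) * real (n + 4)) * c (n + 4) = (real n + \<zeta>) * c n"
  shows "solves_ODE \<alpha> \<zeta> (\<lambda>v. \<Sum>n. c n * v ^ n)"
proof -
  have summable': "summable (\<lambda>n. diffs c n * y ^ n)" for y
    using summable by (rule termdiff_converges_all)
  have summable'': "summable (\<lambda>n. diffs (diffs c) n * y ^ n)" for y
    using summable' by (rule termdiff_converges_all)
  define f d1 d2 d3 where "f v = (\<Sum>n. c n * v ^ n)" and "d1 v = (\<Sum>n. diffs c n * v ^ n)"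
    and "d2 v = (\<Sum>n. diffs (diffs c) n * v ^ n)" and "d3 v = (\<Sum>n. diffs (diffs (diffs c)) n * v ^ n)"
    for v :: real
  have "(f has_real_derivative d1 v) (at v)" for v
    unfolding f_def[abs_def] d1_def by (rule termdiffs_strong_converges_everywhere[OF summable])
  moreover have "(d1 has_real_derivative d2 v) (at v)" for v
    unfolding d1_def[abs_def] d2_def by (rule termdiffs_strong_converges_everywhere[OF summable'])
  moreover have "(d2 has_real_derivative d3 v) (at v)" for v
    unfolding d2_def[abs_def] d3_def by (rule termdiffs_strong_converges_everywhere[OF summable''])
  moreover have "\<alpha> * d3 v - v^2 * d1 v - \<zeta> * v * f v = 0" for v
    using powser_ODE_identity[OF assms, of v] unfolding f_def d1_def d3_def
    by (simp add: power2_eq_square algebra_simps)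
  ultimately show ?thesis
    unfolding solves_ODE_def f_def[symmetric] by blast
qed

definition hyp1F2_quartic_coeff :: "real \<Rightarrow> real \<Rightarrow> real \<Rightarrow> real \<Rightarrow> nat \<Rightarrow> nat \<Rightarrow> real" where
  "hyp1F2_quartic_coeff a b1 b2 \<beta> r n =
     (if n mod 4 = r then hyp1F2_coeff a b1 b2 (n div 4) * \<beta> ^ (n div 4) else 0)"

lemma hyp1F2_quartic_sums:
  assumes "a > 0" "b1 > 0" "b2 > 0" "r < 4"
  shows "(\<lambda>n. hyp1F2_quartic_coeff a b1 b2 \<beta> r n * v ^ n) sums (v ^ r * hyp1F2 a b1 b2 (\<beta> * v ^ 4))"
proof (rule sums_residue_class[of r 4])
  have "(\<lambda>k. v ^ r * (hyp1F2_coeff a b1 b2 k * (\<beta> * v ^ 4) ^ k)) sums (v ^ r * hyp1F2 a b1 b2 (\<beta> * v ^ 4))"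
    using assms by (intro sums_mult hyp1F2_sums)
  moreover have "hyp1F2_quartic_coeff a b1 b2 \<beta> r (4 * k + r) * v ^ (4 * k + r) =
      v ^ r * (hyp1F2_coeff a b1 b2 k * (\<beta> * v ^ 4) ^ k)" for k
    using assms(4) by (simp add: hyp1F2_quartic_coeff_def power_add power_mult_distrib ac_simps flip: power_mult)
  ultimately show "(\<lambda>k. hyp1F2_quartic_coeff a b1 b2 \<beta> r (4 * k + r) * v ^ (4 * k + r)) sums
      (v ^ r * hyp1F2 a b1 b2 (\<beta> * v ^ 4))"
    by simp
qed (use assms in \<open>auto simp: hyp1F2_quartic_coeff_def\<close>)

(* The last hypothesis says that {b1, b2, 1} = {(r+2)/4, (r+3)/4, (r+4)/4}. *)
lemma hyp1F2_quartic_coeff_rec: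
  fixes \<alpha> \<zeta> a b1 b2 :: real and r :: nat
  defines "c \<equiv> hyp1F2_quartic_coeff a b1 b2 (1 / (16 * \<alpha>)) r"
  assumes "\<alpha> > 0" and "4 * a = \<zeta> + real r"
    and "\<And>k. 64 * ((b1 + k) * (b2 + k) * (k + 1)) = (4 * k + r + 2) * (4 * k + r + 3) * (4 * k + r + 4)"
  shows "\<alpha> * (real (n + 2) * real (n + 3) * real (n + 4)) * c (n + 4) = (real n + \<zeta>) * c n"
proof (cases "n mod 4 = r")
  case False
  then show ?thesis by (simp add: c_def hyp1F2_quartic_coeff_def)
next
  case True
  define k where "k = n div 4"
  define D where "D = (b1 + k) * (b2 + k) * (k + 1)"
  have n: "n = 4 * k + r"
    using True k_def by presburger
  have prod: "real (n + 2) * real (n + 3) * real (n + 4) = 64 * D"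
    using assms(4)[of k] by (simp add: n D_def algebra_simps)
  moreover have "real (n + 2) * real (n + 3) * real (n + 4) > 0"
    by simp
  ultimately have "D > 0"
    by simp
  have "c (n + 4) = hyp1F2_coeff a b1 b2 k * ((a + k) / D) * (1 / (16 * \<alpha>)) ^ Suc k"
    using True by (simp add: c_def hyp1F2_quartic_coeff_def hyp1F2_coeff_Suc D_def k_def)
  then have "\<alpha> * (real (n + 2) * real (n + 3) * real (n + 4)) * c (n + 4) =
      \<alpha> * (64 * D) * (hyp1F2_coeff a b1 b2 k * ((a + k) / D) * (1 / (16 * \<alpha>)) ^ Suc k)"
    unfolding prod by simp
  also have "\<dots> = 4 * (a + k) * (hyp1F2_coeff a b1 b2 k * (1 / (16 * \<alpha>)) ^ k)"
    using assms(2) \<open>D > 0\<close> by (simp add: field_simps)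
  also have "\<dots> = (real n + \<zeta>) * c n"
    using True assms(3) by (simp add: c_def hyp1F2_quartic_coeff_def flip: k_def) (simp add: n algebra_simps)
  finally show ?thesis .
qed

lemma solves_ODE_hyp1F2:
  fixes \<alpha> \<zeta> a b1 b2 :: real and r :: nat
  assumes "\<alpha> > 0" "a > 0" "b1 > 0" "b2 > 0" "r < 3" "4 * a = \<zeta> + real r"
    and "\<And>k. 64 * ((b1 + k) * (b2 + k) * (k + 1)) = (4 * k + r + 2) * (4 * k + r + 3) * (4 * k + r + 4)"
  shows "solves_ODE \<alpha> \<zeta> (\<lambda>v. v ^ r * hyp1F2 a b1 b2 (v ^ 4 / (16 * \<alpha>)))"
proof -
  let ?c = "hyp1F2_quartic_coeff a b1 b2 (1 / (16 * \<alpha>)) r"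
  have sums: "(\<lambda>n. ?c n * v ^ n) sums (v ^ r * hyp1F2 a b1 b2 (v ^ 4 / (16 * \<alpha>)))" for v
    using hyp1F2_quartic_sums[of a b1 b2 r "1 / (16 * \<alpha>)" v] assms by simp
  have "solves_ODE \<alpha> \<zeta> (\<lambda>v. \<Sum>n. ?c n * v ^ n)"
    using assms sums_summable[OF sums]
    by (intro solves_ODE_powser hyp1F2_quartic_coeff_rec) (auto simp: hyp1F2_quartic_coeff_def)
  moreover have "(\<lambda>v. \<Sum>n. ?c n * v ^ n) = (\<lambda>v. v ^ r * hyp1F2 a b1 b2 (v ^ 4 / (16 * \<alpha>)))"
    using sums by (simp add: sums_iff)
  ultimately show ?thesis by simp
qed

lemma Gamma_add_of_nat:
  assumes "x > 0"
  shows "Gamma (x + real k) = Gamma x * pochhammer x k"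
proof -
  have "x \<notin> \<int>\<^sub>\<le>\<^sub>0"
    using assms nonpos_Ints_nonpos by fastforce
  then show ?thesis
    using pochhammer_Gamma[of x k] Gamma_real_pos[OF assms] by (simp add: field_simps)
qed

lemma Gamma_5_4: "Gamma (5/4 :: real) = Gamma (1/4) / 4"
  using Gamma_add_of_nat[of "1/4" 1] by simp

lemma Gamma_3_2: "Gamma (3/2 :: real) = sqrt pi / 2"
  using Gamma_add_of_nat[of "1/2" 1] Gamma_one_half_real by simp

lemma fact_double_Suc: "fact (2 * k + 1) = (4 ^ k * fact k * pochhammer (3/2) k :: real)"
proof -
  have "(2 * real k + 1) * pochhammer (1/2) k = 2 * pochhammer (1/2) (Suc k)"
    by (simp add: pochhammer_rec' algebra_simps)
  also have "\<dots> = pochhammer (3/2) k"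
    by (simp add: pochhammer_rec)
  finally have poch: "(2 * real k + 1) * pochhammer (1/2) k = pochhammer (3/2) k" .
  have "fact (2 * k + 1) = (2 * real k + 1) * (fact (2 * k) :: real)"
    by (simp add: algebra_simps)
  also have "\<dots> = 4 ^ k * fact k * ((2 * real k + 1) * pochhammer (1/2) k)"
    by (simp add: fact_double power_mult)
  finally show ?thesis
    unfolding poch .
qed

definition Omega0_term :: "real \<Rightarrow> real \<Rightarrow> nat \<Rightarrow> real" where
  "Omega0_term \<zeta> x l = Gamma (real l / 2 + \<zeta>/4) / (fact l * Gamma (real l / 2 + 3/4)) * x ^ l"

lemma Omega0_term_even:
  assumes "\<zeta> > 0"
  shows "Omega0_term \<zeta> x (2 * k) =
    Gamma (\<zeta>/4) / Gamma (3/4) * (hyp1F2_coeff (\<zeta>/4) (1/2) (3/4) k * (x^2 / 4) ^ k)"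
proof -
  have num: "Gamma (real (2 * k) / 2 + \<zeta>/4) = Gamma (\<zeta>/4) * pochhammer (\<zeta>/4) k"
    using Gamma_add_of_nat[of "\<zeta>/4" k] assms by (simp add: add.commute)
  have den: "Gamma (real (2 * k) / 2 + 3/4) = Gamma (3/4) * pochhammer (3/4) k"
    using Gamma_add_of_nat[of "3/4" k] by (simp add: add.commute)
  have fact: "fact (2 * k) = (4::real) ^ k * pochhammer (1/2) k * fact k"
    by (simp add: fact_double power_mult)
  have pow: "x ^ (2 * k) = 4 ^ k * (x^2 / 4) ^ k"
    by (simp add: power_mult power_divide)
  have "pochhammer (1/2::real) k > 0" "pochhammer (3/4::real) k > 0"
    by (auto intro!: pochhammer_pos)
  then show ?thesis
    using assms unfolding Omega0_term_def num den fact pow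
    by (simp add: hyp1F2_coeff_def field_simps)
qed

lemma Omega0_term_odd:
  assumes "\<zeta> > 0"
  shows "Omega0_term \<zeta> x (2 * k + 1) =
    4 * Gamma ((\<zeta>+2)/4) / Gamma (1/4) * x * (hyp1F2_coeff ((\<zeta>+2)/4) (5/4) (3/2) k * (x^2 / 4) ^ k)"
proof -
  have num: "Gamma (real (2 * k + 1) / 2 + \<zeta>/4) = Gamma ((\<zeta>+2)/4) * pochhammer ((\<zeta>+2)/4) k"
    using Gamma_add_of_nat[of "(\<zeta>+2)/4" k] assms by (simp add: field_simps)
  have den: "Gamma (real (2 * k + 1) / 2 + 3/4) = Gamma (1/4) / 4 * pochhammer (5/4) k"
    using Gamma_add_of_nat[of "5/4" k] Gamma_5_4 by (simp add: field_simps)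
  have pow: "x ^ (2 * k + 1) = x * (4 ^ k * (x^2 / 4) ^ k)"
    by (simp add: power_mult power_divide)
  have "pochhammer (3/2::real) k > 0" "pochhammer (5/4::real) k > 0"
    by (auto intro!: pochhammer_pos)
  then show ?thesis
    using assms unfolding Omega0_term_def num den fact_double_Suc pow
    by (simp add: hyp1F2_coeff_def field_simps)
qed

lemma Omega0_term_sums:
  assumes "\<zeta> > 0"
  shows "Omega0_term \<zeta> x sums
    (Gamma (\<zeta>/4) / Gamma (3/4) * hyp1F2 (\<zeta>/4) (1/2) (3/4) (x^2 / 4)
     + 4 * Gamma ((\<zeta>+2)/4) / Gamma (1/4) * x * hyp1F2 ((\<zeta>+2)/4) (5/4) (3/2) (x^2 / 4))"
    (is "_ sums (?A + ?B)")
proof -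
  have "Omega0_term \<zeta> x sums (\<Sum>j<(2::nat). if j = 0 then ?A else ?B)"
  proof (rule sums_residue_classes)
    fix j :: nat
    assume "j < 2"
    then consider "j = 0" | "j = 1" by linarith
    then show "(\<lambda>k. Omega0_term \<zeta> x (2 * k + j)) sums (if j = 0 then ?A else ?B)"
    proof cases
      case 1
      have "(\<lambda>k. Gamma (\<zeta>/4) / Gamma (3/4) * (hyp1F2_coeff (\<zeta>/4) (1/2) (3/4) k * (x^2 / 4) ^ k)) sums ?A"
        using assms by (intro sums_mult hyp1F2_sums) simp_all
      then show ?thesis
        using 1 by (simp only: Omega0_term_even[OF assms] add_0_right) simp
    next
      case 2
      have "(\<lambda>k. 4 * Gamma ((\<zeta>+2)/4) / Gamma (1/4) * x *
          (hyp1F2_coeff ((\<zeta>+2)/4) (5/4) (3/2) k * (x^2 / 4) ^ k)) sums ?B"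
        using assms by (intro sums_mult hyp1F2_sums) simp_all
      then show ?thesis
        using 2 by (simp only: Omega0_term_odd[OF assms]) simp
    qed
  qed simp
  then show ?thesis
    by (simp add: numeral_2_eq_2)
qed

lemma Omega0_eq:
  assumes "\<alpha> > 0" "\<zeta> > 0"
  shows "Omega0 \<alpha> \<zeta> v = f1 \<alpha> \<zeta> v
             - 2 * Gamma (3/4) * Gamma ((\<zeta>+2)/4) / (sqrt \<alpha> * Gamma (1/4) * Gamma (\<zeta>/4)) * f3 \<alpha> \<zeta> v"
proof -
  define x where "x = - (v^2) / (2 * sqrt \<alpha>)"
  define C F where "C = Gamma (3/4) / Gamma (\<zeta>/4)"
    and "F = hyp1F2 ((\<zeta>+2)/4) (5/4) (3/2) (v^4 / (16 * \<alpha>))"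
  have w: "x^2 / 4 = v^4 / (16 * \<alpha>)"
    using assms by (simp add: x_def power_divide power_mult_distrib flip: power_mult)
  have "Gamma (3/4 :: real) > 0" "Gamma (1/4 :: real) > 0" "Gamma (\<zeta>/4) > 0" "sqrt \<alpha> > 0"
    using assms by simp_all
  note nonzero = this[THEN order_less_imp_not_eq2]
  have "Omega0 \<alpha> \<zeta> v = C * suminf (Omega0_term \<zeta> x)"
    unfolding Omega0_def Omega0_term_def x_def C_def ..
  also have "suminf (Omega0_term \<zeta> x) =
      Gamma (\<zeta>/4) / Gamma (3/4) * f1 \<alpha> \<zeta> v + 4 * Gamma ((\<zeta>+2)/4) / Gamma (1/4) * x * F"
    using sums_unique[OF Omega0_term_sums[OF assms(2), of x]] unfolding w f1_def F_def by (rule sym)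
  finally have "Omega0 \<alpha> \<zeta> v = C * (Gamma (\<zeta>/4) / Gamma (3/4) * f1 \<alpha> \<zeta> v)
      + C * (4 * Gamma ((\<zeta>+2)/4) / Gamma (1/4) * x * F)"
    by (simp only: distrib_left)
  moreover have "C * (Gamma (\<zeta>/4) / Gamma (3/4) * f1 \<alpha> \<zeta> v) = f1 \<alpha> \<zeta> v"
    using nonzero by (simp add: C_def)
  moreover have "C * (4 * Gamma ((\<zeta>+2)/4) / Gamma (1/4) * x * F) =
      - (2 * Gamma (3/4) * Gamma ((\<zeta>+2)/4) / (sqrt \<alpha> * Gamma (1/4) * Gamma (\<zeta>/4))) * f3 \<alpha> \<zeta> v"
    using nonzero by (simp add: C_def x_def f3_def F_def field_simps)
  ultimately show ?thesis
    by simp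
qed

lemma s_coef_add_4k: "s_coef (4 * k + j) = s_coef j"
proof -
  have arg: "real (4 * k + j) * pi / 4 = real k * pi + real j * pi / 4"
    by (simp add: field_simps)
  have "cos (real (4 * k + j) * pi / 4) = (-1) ^ k * cos (real j * pi / 4)"
    "sin (real (4 * k + j) * pi / 4) = (-1) ^ k * sin (real j * pi / 4)"
    unfolding arg by (simp_all add: cos_add sin_add)
  moreover have "((-1::real) ^ k) * (-1) ^ k = 1"
    by (simp flip: power_add)
  ultimately show ?thesis
    unfolding s_coef_def by (simp add: algebra_simps)
qed

lemma s_coef_values: "s_coef 0 = sqrt 2 / 2" "s_coef 1 = sqrt 2 / 2" "s_coef 2 = 0" "s_coef 3 = 0"
proof -
  show "s_coef 0 = sqrt 2 / 2" "s_coef 2 = 0"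
    by (simp_all add: s_coef_def real_div_sqrt)
  show "s_coef 1 = sqrt 2 / 2"
    by (simp add: s_coef_def cos_45 sin_45 real_div_sqrt)
  have arg: "3 * pi / 4 = pi - pi / 4"
    by simp
  have "cos (3 * pi / 4) = - (sqrt 2 / 2)" "sin (3 * pi / 4) = sqrt 2 / 2"
    unfolding arg cos_pi_minus sin_pi_minus cos_45 sin_45 by simp_all
  then show "s_coef 3 = 0"
    by (simp add: s_coef_def)
qed

definition Omega1_term :: "real \<Rightarrow> real \<Rightarrow> nat \<Rightarrow> real" where
  "Omega1_term \<zeta> y l =
     Gamma ((real l + 1 + \<zeta>)/4) * s_coef l / (Gamma (real l / 4 + 1) * Gamma ((real l + 3)/2)) * y ^ l"

lemma Omega1_term_4k:
  assumes "\<zeta> > 0"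
  shows "Omega1_term \<zeta> y (4 * k) =
    sqrt 2 * Gamma ((\<zeta>+1)/4) / sqrt pi * (hyp1F2_coeff ((\<zeta>+1)/4) (3/4) (5/4) k * (y^4 / 4) ^ k)"
proof -
  have num: "Gamma ((real (4 * k) + 1 + \<zeta>)/4) = Gamma ((\<zeta>+1)/4) * pochhammer ((\<zeta>+1)/4) k"
    using Gamma_add_of_nat[of "(\<zeta>+1)/4" k] assms by (simp add: field_simps)
  have den1: "Gamma (real (4 * k) / 4 + 1) = fact k"
    using Gamma_fact[of k] by (simp add: add.commute)
  have "pochhammer (3/2::real) (2 * k) = 4 ^ k * pochhammer (3/4) k * pochhammer (5/4) k"
    using pochhammer_double[of "3/4::real" k] by (simp add: power_mult)
  then have den2: "Gamma ((real (4 * k) + 3)/2) = sqrt pi / 2 * (4 ^ k * pochhammer (3/4) k * pochhammer (5/4) k)"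
    using Gamma_add_of_nat[of "3/2" "2 * k"] by (simp add: Gamma_3_2 field_simps)
  have pow: "y ^ (4 * k) = 4 ^ k * (y^4 / 4) ^ k"
    by (simp add: power_mult power_divide)
  have s: "s_coef (4 * k) = sqrt 2 / 2"
    using s_coef_add_4k[of k 0] s_coef_values by simp
  have "pochhammer (3/4::real) k > 0" "pochhammer (5/4::real) k > 0"
    by (auto intro!: pochhammer_pos)
  then show ?thesis
    using assms unfolding Omega1_term_def num den1 den2 pow s
    by (simp add: hyp1F2_coeff_def field_simps)
qed

lemma Omega1_term_4k_1:
  assumes "\<zeta> > 0"
  shows "Omega1_term \<zeta> y (4 * k + 1) =
    2 * sqrt 2 * Gamma ((\<zeta>+2)/4) / Gamma (1/4) * y * (hyp1F2_coeff ((\<zeta>+2)/4) (5/4) (3/2) k * (y^4 / 4) ^ k)"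
proof -
  have num: "Gamma ((real (4 * k + 1) + 1 + \<zeta>)/4) = Gamma ((\<zeta>+2)/4) * pochhammer ((\<zeta>+2)/4) k"
    using Gamma_add_of_nat[of "(\<zeta>+2)/4" k] assms by (simp add: field_simps)
  have den1: "Gamma (real (4 * k + 1) / 4 + 1) = Gamma (1/4) / 4 * pochhammer (5/4) k"
    using Gamma_add_of_nat[of "5/4" k] Gamma_5_4 by (simp add: field_simps)
  have "(real (4 * k + 1) + 3)/2 = 1 + real (2 * k + 1)"
    by (simp add: field_simps)
  then have den2: "Gamma ((real (4 * k + 1) + 3)/2) = 4 ^ k * fact k * pochhammer (3/2) k"
    by (simp only: Gamma_fact fact_double_Suc)
  have pow: "y ^ (4 * k + 1) = y * (4 ^ k * (y^4 / 4) ^ k)"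
    by (simp add: power_mult power_divide)
  have s: "s_coef (4 * k + 1) = sqrt 2 / 2"
    using s_coef_add_4k[of k 1] s_coef_values by simp
  have "pochhammer (3/2::real) k > 0" "pochhammer (5/4::real) k > 0"
    by (auto intro!: pochhammer_pos)
  then show ?thesis
    using assms unfolding Omega1_term_def num den1 den2 pow s
    by (simp add: hyp1F2_coeff_def field_simps)
qed

lemma Omega1_term_sums:
  assumes "\<zeta> > 0"
  shows "Omega1_term \<zeta> y sums
    (sqrt 2 * Gamma ((\<zeta>+1)/4) / sqrt pi * hyp1F2 ((\<zeta>+1)/4) (3/4) (5/4) (y^4 / 4)
     + 2 * sqrt 2 * Gamma ((\<zeta>+2)/4) / Gamma (1/4) * y * hyp1F2 ((\<zeta>+2)/4) (5/4) (3/2) (y^4 / 4))"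
    (is "_ sums (?A + ?B)")
proof -
  have "Omega1_term \<zeta> y sums (\<Sum>j<(4::nat). if j = 0 then ?A else if j = 1 then ?B else 0)"
  proof (rule sums_residue_classes)
    fix j :: nat
    assume "j < 4"
    then consider "j = 0" | "j = 1" | "j = 2" | "j = 3" by linarith
    then show "(\<lambda>k. Omega1_term \<zeta> y (4 * k + j)) sums (if j = 0 then ?A else if j = 1 then ?B else 0)"
    proof cases
      case 1
      have "(\<lambda>k. sqrt 2 * Gamma ((\<zeta>+1)/4) / sqrt pi *
          (hyp1F2_coeff ((\<zeta>+1)/4) (3/4) (5/4) k * (y^4 / 4) ^ k)) sums ?A"
        using assms by (intro sums_mult hyp1F2_sums) simp_all
      then show ?thesis
        using 1 by (simp only: Omega1_term_4k[OF assms] add_0_right) simp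
    next
      case 2
      have "(\<lambda>k. 2 * sqrt 2 * Gamma ((\<zeta>+2)/4) / Gamma (1/4) * y *
          (hyp1F2_coeff ((\<zeta>+2)/4) (5/4) (3/2) k * (y^4 / 4) ^ k)) sums ?B"
        using assms by (intro sums_mult hyp1F2_sums) simp_all
      then show ?thesis
        using 2 by (simp only: Omega1_term_4k_1[OF assms]) simp
    qed (simp_all only: Omega1_term_def s_coef_add_4k s_coef_values, simp_all)
  qed simp
  then show ?thesis
    by (simp add: numeral_eq_Suc)
qed

lemma Omega1_eq:
  assumes "\<alpha> > 0" "\<zeta> > 0"
  shows "Omega1 \<alpha> \<zeta> v = f2 \<alpha> \<zeta> v
             - sqrt (2 * pi) * Gamma ((\<zeta>+2)/4) / (\<alpha> powr (1/4) * Gamma (1/4) * Gamma ((\<zeta>+1)/4)) * f3 \<alpha> \<zeta> v"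
proof -
  define y where "y = - v / ((4 * \<alpha>) powr (1/4))"
  define C F where "C = v * sqrt (pi / 2) / Gamma ((\<zeta> + 1)/4)"
    and "F = hyp1F2 ((\<zeta>+2)/4) (5/4) (3/2) (v^4 / (16 * \<alpha>))"
  have "(4::real) = 2 powr 2"
    by simp
  then have "(4::real) powr (1/4) = 2 powr (2 * (1/4))"
    by (metis powr_powr)
  also have "\<dots> = sqrt 2"
    by (simp add: powr_half_sqrt)
  finally have y_alt: "y = - v / (sqrt 2 * \<alpha> powr (1/4))"
    using assms by (simp add: y_def powr_mult)
  have w: "y^4 / 4 = v^4 / (16 * \<alpha>)"
    using assms by (simp add: y_def power_divide powr_power)
  have sqrt_2pi: "2 * sqrt (pi / 2) = sqrt (2 * pi)"
    using real_sqrt_mult[of 4 "pi / 2"] by simp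
  have "Gamma (1/4 :: real) > 0" "Gamma ((\<zeta>+1)/4) > 0" "\<alpha> powr (1/4) > 0" "sqrt pi > 0"
    using assms by simp_all
  note nonzero = this[THEN order_less_imp_not_eq2]
  have "Omega1 \<alpha> \<zeta> v = C * suminf (Omega1_term \<zeta> y)"
    unfolding Omega1_def Omega1_term_def y_def C_def ..
  also have "suminf (Omega1_term \<zeta> y) =
      sqrt 2 * Gamma ((\<zeta>+1)/4) / sqrt pi * hyp1F2 ((\<zeta>+1)/4) (3/4) (5/4) (v^4 / (16 * \<alpha>))
      + 2 * sqrt 2 * Gamma ((\<zeta>+2)/4) / Gamma (1/4) * y * F"
    using sums_unique[OF Omega1_term_sums[OF assms(2), of y]] unfolding w F_def by (rule sym)
  finally have "Omega1 \<alpha> \<zeta> v =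
      C * (sqrt 2 * Gamma ((\<zeta>+1)/4) / sqrt pi * hyp1F2 ((\<zeta>+1)/4) (3/4) (5/4) (v^4 / (16 * \<alpha>)))
      + C * (2 * sqrt 2 * Gamma ((\<zeta>+2)/4) / Gamma (1/4) * y * F)"
    by (simp only: distrib_left)
  moreover have "C * (sqrt 2 * Gamma ((\<zeta>+1)/4) / sqrt pi * hyp1F2 ((\<zeta>+1)/4) (3/4) (5/4) (v^4 / (16 * \<alpha>)))
      = f2 \<alpha> \<zeta> v"
    using nonzero by (simp add: C_def f2_def real_sqrt_divide field_simps)
  moreover have "C * (2 * sqrt 2 * Gamma ((\<zeta>+2)/4) / Gamma (1/4) * y * F) =
      - (2 * sqrt (pi / 2) * Gamma ((\<zeta>+2)/4) / (\<alpha> powr (1/4) * Gamma (1/4) * Gamma ((\<zeta>+1)/4))) * f3 \<alpha> \<zeta> v"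
    using nonzero by (simp add: C_def y_alt f3_def F_def power2_eq_square field_simps)
  ultimately show ?thesis
    unfolding sqrt_2pi by simp
qed

lemma f1_f2_f3_linear_independent:
  assumes "\<alpha> > 0" "\<zeta> > 0" and "\<And>v. c1 * f1 \<alpha> \<zeta> v + c2 * f2 \<alpha> \<zeta> v + c3 * f3 \<alpha> \<zeta> v = 0"
  shows "c1 = 0 \<and> c2 = 0 \<and> c3 = 0"
proof -
  define A B where "A = hyp1F2 ((\<zeta>+1)/4) (3/4) (5/4) (1 / (16 * \<alpha>))"
    and "B = hyp1F2 ((\<zeta>+2)/4) (5/4) (3/2) (1 / (16 * \<alpha>))"
  have "A \<ge> 1" "B \<ge> 1"
    unfolding A_def B_def using assms by (auto intro!: hyp1F2_ge_1)
  moreover have "c1 = 0"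
    using assms(3)[of 0] by (simp add: f1_def f2_def f3_def)
  moreover have "c2 * A + c3 * B = 0" "- (c2 * A) + c3 * B = 0"
    using assms(3)[of 1] assms(3)[of "-1"] \<open>c1 = 0\<close> by (simp_all add: f2_def f3_def A_def B_def)
  ultimately show ?thesis
    by (smt (verit) mult_eq_0_iff)
qed

lemma solves_ODE_f1: "\<alpha> > 0 \<Longrightarrow> \<zeta> > 0 \<Longrightarrow> solves_ODE \<alpha> \<zeta> (f1 \<alpha> \<zeta>)"
  using solves_ODE_hyp1F2[of \<alpha> "\<zeta>/4" "1/2" "3/4" 0 \<zeta>]
  by (simp add: f1_def[abs_def] field_simps)

lemma solves_ODE_f2: "\<alpha> > 0 \<Longrightarrow> \<zeta> > 0 \<Longrightarrow> solves_ODE \<alpha> \<zeta> (f2 \<alpha> \<zeta>)"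
  using solves_ODE_hyp1F2[of \<alpha> "(\<zeta>+1)/4" "3/4" "5/4" 1 \<zeta>]
  by (simp add: f2_def[abs_def] field_simps)

lemma solves_ODE_f3: "\<alpha> > 0 \<Longrightarrow> \<zeta> > 0 \<Longrightarrow> solves_ODE \<alpha> \<zeta> (f3 \<alpha> \<zeta>)"
  using solves_ODE_hyp1F2[of \<alpha> "(\<zeta>+2)/4" "5/4" "3/2" 2 \<zeta>]
  by (simp add: f3_def[abs_def] field_simps)

theorem mainTheorem3:
  fixes \<alpha> \<zeta> :: real
  assumes "\<alpha> > 0" and "\<zeta> > 0"
  shows "solves_ODE \<alpha> \<zeta> (f1 \<alpha> \<zeta>) \<and> solves_ODE \<alpha> \<zeta> (f2 \<alpha> \<zeta>) \<and> solves_ODE \<alpha> \<zeta> (f3 \<alpha> \<zeta>)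
    \<and> (\<forall>c1 c2 c3 :: real.
          (\<forall>v. c1 * f1 \<alpha> \<zeta> v + c2 * f2 \<alpha> \<zeta> v + c3 * f3 \<alpha> \<zeta> v = 0)
          \<longrightarrow> c1 = 0 \<and> c2 = 0 \<and> c3 = 0)
    \<and> (\<forall>v. Omega0 \<alpha> \<zeta> v = f1 \<alpha> \<zeta> v
             - 2 * Gamma (3/4) * Gamma ((\<zeta>+2)/4) / (sqrt \<alpha> * Gamma (1/4) * Gamma (\<zeta>/4)) * f3 \<alpha> \<zeta> v)
    \<and> (\<forall>v. Omega1 \<alpha> \<zeta> v = f2 \<alpha> \<zeta> v
             - sqrt (2 * pi) * Gamma ((\<zeta>+2)/4) / (\<alpha> powr (1/4) * Gamma (1/4) * Gamma ((\<zeta>+1)/4)) * f3 \<alpha> \<zeta> v)"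
  by (simp add: assms solves_ODE_f1 solves_ODE_f2 solves_ODE_f3 Omega0_eq Omega1_eq)
    (use f1_f2_f3_linear_independent[OF assms] in blast)

end
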